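(* If a triangle-free oriented graph $G$ has a cut vertex, then either $G$ has a full in-star cutset, or $G$ has a vertex of degree at most $1$.
   Context: Oriented graphs are finite, without loops, multiple arcs or pairs of opposite arcs; triangle-free, cut vertex, degree and connectivity refer to the underlying graph (a cut vertex is a vertex whose removal increases the number of connected components). $N^-[v]$ is $v$ together with its in-neighbors. A full in-star cutset of $G$ is a set $N^-[v]$, for some vertex $v$, such that $G\setminus N^-[v]$ is disconnected. *)

theory Defs
  imports Main
begin

text \<open>An oriented graph: finite vertex set V, arc set A \<subseteq> V \<times> V, no loops,
  no pair of opposite arcs (multiple arcs are impossible since A is a set).\<close>
definition oriented_graph :: "'a set \<Rightarrow> ('a \<times> 'a) set \<Rightarrow> bool" where
  "oriented_graph V A \<longleftrightarrow> finite V \<and> A \<subseteq> V \<times> V \<and>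
     (\<forall>v. (v, v) \<notin> A) \<and> (\<forall>u v. (u, v) \<in> A \<longrightarrow> (v, u) \<notin> A)"

definition adj :: "('a \<times> 'a) set \<Rightarrow> 'a \<Rightarrow> 'a \<Rightarrow> bool" where
  "adj A u v \<longleftrightarrow> (u, v) \<in> A \<or> (v, u) \<in> A"

definition triangle_free :: "'a set \<Rightarrow> ('a \<times> 'a) set \<Rightarrow> bool" where
  "triangle_free V A \<longleftrightarrow> \<not> (\<exists>x\<in>V. \<exists>y\<in>V. \<exists>z\<in>V. adj A x y \<and> adj A y z \<and> adj A x z)"

definition degree :: "'a set \<Rightarrow> ('a \<times> 'a) set \<Rightarrow> 'a \<Rightarrow> nat" where
  "degree V A v = card {u \<in> V. adj A u v}"

definition reach_in :: "'a set \<Rightarrow> ('a \<times> 'a) set \<Rightarrow> 'a \<Rightarrow> 'a \<Rightarrow> bool" where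
  "reach_in S A u v \<longleftrightarrow> u \<in> S \<and> v \<in> S \<and>
     (u, v) \<in> ({(x, y). x \<in> S \<and> y \<in> S \<and> adj A x y})\<^sup>*"

definition components :: "'a set \<Rightarrow> ('a \<times> 'a) set \<Rightarrow> 'a set set" where
  "components S A = {{v. reach_in S A u v} | u. u \<in> S}"

definition num_components :: "'a set \<Rightarrow> ('a \<times> 'a) set \<Rightarrow> nat" where
  "num_components S A = card (components S A)"

definition disconnected :: "'a set \<Rightarrow> ('a \<times> 'a) set \<Rightarrow> bool" where
  "disconnected S A \<longleftrightarrow> num_components S A \<ge> 2"

definition cut_vertex :: "'a set \<Rightarrow> ('a \<times> 'a) set \<Rightarrow> 'a \<Rightarrow> bool" where
  "cut_vertex V A v \<longleftrightarrow> v \<in> V \<and> num_components (V - {v}) A > num_components V A"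

definition closed_in_nbhd :: "'a set \<Rightarrow> ('a \<times> 'a) set \<Rightarrow> 'a \<Rightarrow> 'a set" where
  "closed_in_nbhd V A v = insert v {u \<in> V. (u, v) \<in> A}"

definition has_full_in_star_cutset :: "'a set \<Rightarrow> ('a \<times> 'a) set \<Rightarrow> bool" where
  "has_full_in_star_cutset V A \<longleftrightarrow>
     (\<exists>v\<in>V. disconnected (V - closed_in_nbhd V A v) A)"

end

theory Submission
  imports Defs
begin

text \<open>Let \<open>v\<close> be a cut vertex and suppose every degree is at least 2. A vertex \<open>u \<noteq> v\<close>
  has a neighbour \<open>x \<noteq> v\<close>; if the whole component of \<open>u\<close> in \<open>G - v\<close> consisted of
  in-neighbours of \<open>v\<close>, then \<open>u, x, v\<close> would be a triangle. So every component of \<open>G - v\<close>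
  meets \<open>G - N\<^sup>-[v]\<close>; were the latter connected, \<open>G - v\<close> would be connected too, contradicting
  that \<open>v\<close> is a cut vertex.\<close>

definition connected_in :: "'a set \<Rightarrow> ('a \<times> 'a) set \<Rightarrow> bool" where
  "connected_in S A \<longleftrightarrow> (\<forall>u\<in>S. \<forall>w\<in>S. reach_in S A u w)"

lemma reach_in_refl: "u \<in> S \<Longrightarrow> reach_in S A u u"
  by (simp add: reach_in_def)

lemma reach_in_adj: "u \<in> S \<Longrightarrow> w \<in> S \<Longrightarrow> adj A u w \<Longrightarrow> reach_in S A u w"
  by (auto simp: reach_in_def)

lemma reach_in_sym:
  assumes "reach_in S A u w"
  shows "reach_in S A w u"
proof -
  let ?R = "{(x, y). x \<in> S \<and> y \<in> S \<and> adj A x y}"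
  have "?R\<inverse> = ?R" by (auto simp: adj_def)
  moreover have "(w, u) \<in> (?R\<inverse>)\<^sup>*"
    using assms by (simp add: reach_in_def rtrancl_converseI)
  ultimately show ?thesis using assms by (simp add: reach_in_def)
qed

lemma reach_in_trans: "reach_in S A u w \<Longrightarrow> reach_in S A w x \<Longrightarrow> reach_in S A u x"
  unfolding reach_in_def by (meson rtrancl_trans)

lemma reach_in_mono:
  assumes "S \<subseteq> T" "reach_in S A u w"
  shows "reach_in T A u w"
proof -
  have "{(x, y). x \<in> S \<and> y \<in> S \<and> adj A x y} \<subseteq> {(x, y). x \<in> T \<and> y \<in> T \<and> adj A x y}"
    using assms(1) by auto
  then show ?thesis using assms unfolding reach_in_def by (meson rtrancl_mono subsetD)
qed

lemma components_eq_image: "components S A = (\<lambda>u. {w. reach_in S A u w}) ` S"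
  unfolding components_def by blast

lemma num_components_le_1_iff:
  assumes "finite S"
  shows "num_components S A \<le> 1 \<longleftrightarrow> connected_in S A"
proof
  assume le1: "num_components S A \<le> 1"
  show "connected_in S A" unfolding connected_in_def
  proof (intro ballI)
    fix u w assume "u \<in> S" "w \<in> S"
    then have "{x. reach_in S A u x} \<in> components S A" "{x. reach_in S A w x} \<in> components S A"
      by (auto simp: components_eq_image)
    moreover have "finite (components S A)" using assms by (simp add: components_eq_image)
    ultimately have "{x. reach_in S A u x} = {x. reach_in S A w x}"
      using le1 by (auto simp: num_components_def card_le_Suc0_iff_eq)
    then show "reach_in S A u w" using reach_in_refl[OF \<open>w \<in> S\<close>] by blast
  qed
next
  assume "connected_in S A"
  then have "{x. reach_in S A u x} = {x. reach_in S A w x}" if "u \<in> S" "w \<in> S" for u w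
    using that unfolding connected_in_def by (blast intro: reach_in_trans reach_in_sym)
  then have "\<forall>X\<in>components S A. \<forall>Y\<in>components S A. X = Y"
    unfolding components_eq_image by blast
  moreover have "finite (components S A)" using assms by (simp add: components_eq_image)
  ultimately show "num_components S A \<le> 1"
    by (simp add: num_components_def card_le_Suc0_iff_eq)
qed

lemma num_components_pos:
  assumes "finite S" "S \<noteq> {}"
  shows "num_components S A > 0"
  using assms by (simp add: num_components_def components_eq_image card_gt_0_iff)

lemma cut_vertex_not_connected:
  assumes "finite V" "cut_vertex V A v"
  shows "\<not> connected_in (V - {v}) A"
proof
  assume "connected_in (V - {v}) A"
  then have "num_components (V - {v}) A \<le> 1"
    using assms(1) num_components_le_1_iff by blast
  moreover have "num_components V A > 0"
    using assms by (auto simp: cut_vertex_def intro: num_components_pos)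
  ultimately show False using assms(2) by (simp add: cut_vertex_def)
qed

lemma connected_in_if_reaches_connected_subset:
  assumes "S \<subseteq> T" "connected_in S A" "\<forall>u\<in>T. \<exists>s\<in>S. reach_in T A u s"
  shows "connected_in T A"
  unfolding connected_in_def
proof (intro ballI)
  fix u w assume "u \<in> T" "w \<in> T"
  with assms(3) obtain s s' where "s \<in> S" "reach_in T A u s" "s' \<in> S" "reach_in T A w s'"
    by blast
  moreover have "reach_in T A s s'"
    using assms(1,2) \<open>s \<in> S\<close> \<open>s' \<in> S\<close> by (auto simp: connected_in_def intro: reach_in_mono)
  ultimately show "reach_in T A u w" by (blast intro: reach_in_trans reach_in_sym)
qed

lemma triangle_free_degree_le_1_if_component_in_in_nbhd:
  assumes "triangle_free V A" "v \<in> V" "u \<in> V - {v}"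
    and into_v: "\<And>w. reach_in (V - {v}) A u w \<Longrightarrow> (w, v) \<in> A"
  shows "degree V A u \<le> 1"
proof -
  have "{x \<in> V. adj A x u} \<subseteq> {v}"
  proof
    fix x assume x: "x \<in> {x \<in> V. adj A x u}"
    show "x \<in> {v}"
    proof (rule ccontr)
      assume "x \<notin> {v}"
      then have "reach_in (V - {v}) A u x"
        using x assms(3) by (intro reach_in_adj) (auto simp: adj_def)
      then have "adj A x v" "adj A u v"
        using into_v reach_in_refl[OF assms(3)] by (auto simp: adj_def)
      moreover have "adj A x u" "x \<in> V" "u \<in> V" using x assms(3) by auto
      ultimately show False
        using assms(1,2) unfolding triangle_free_def by blast
    qed
  qed
  then show ?thesis unfolding degree_def using card_mono[of "{v}"] by fastforce
qed

lemma triangle_free_reaches_outside_closed_in_nbhd: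
  assumes "triangle_free V A" "v \<in> V" "u \<in> V - {v}" "degree V A u > 1"
  shows "\<exists>s\<in>V - closed_in_nbhd V A v. reach_in (V - {v}) A u s"
proof (rule ccontr)
  assume avoids: "\<not> ?thesis"
  have "(w, v) \<in> A" if "reach_in (V - {v}) A u w" for w
  proof -
    have "w \<in> V - {v}" using that by (simp add: reach_in_def)
    moreover have "w \<notin> V - closed_in_nbhd V A v" using that avoids by blast
    ultimately show ?thesis by (simp add: closed_in_nbhd_def)
  qed
  then have "degree V A u \<le> 1"
    by (rule triangle_free_degree_le_1_if_component_in_in_nbhd [OF assms(1-3)])
  with assms(4) show False by simp
qed

theorem lemma5p4:
  assumes "oriented_graph V A"
    and "triangle_free V A"
    and "\<exists>v. cut_vertex V A v"
  shows "has_full_in_star_cutset V A \<or> (\<exists>v\<in>V. degree V A v \<le> 1)"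
proof (rule ccontr)
  assume contra: "\<not> (has_full_in_star_cutset V A \<or> (\<exists>v\<in>V. degree V A v \<le> 1))"
  obtain v where cut: "cut_vertex V A v" using assms(3) by blast
  then have "v \<in> V" by (simp add: cut_vertex_def)
  have "finite V" using assms(1) by (simp add: oriented_graph_def)
  let ?S = "V - closed_in_nbhd V A v"
  have "num_components ?S A \<le> 1"
    using contra \<open>v \<in> V\<close> by (auto simp: has_full_in_star_cutset_def disconnected_def)
  then have "connected_in ?S A"
    using \<open>finite V\<close> num_components_le_1_iff finite_Diff by blast
  moreover have "\<forall>u\<in>V - {v}. \<exists>s\<in>?S. reach_in (V - {v}) A u s"
    using contra assms(2) \<open>v \<in> V\<close> triangle_free_reaches_outside_closed_in_nbhd
    by (metis Diff_iff not_le)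
  ultimately have "connected_in (V - {v}) A"
    by (rule connected_in_if_reaches_connected_subset [rotated])
      (auto simp: closed_in_nbhd_def)
  with cut_vertex_not_connected[OF \<open>finite V\<close> cut] show False ..
qed

end
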